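(* Let $L$ be a complex Leibniz algebra, let $I$ be the ideal of $L$ generated by all squares $[x,x]$, $x\in L$, and suppose that $L/I\cong\mathfrak{e}(2)$ and that $I$, regarded as a right $\mathfrak{e}(2)$-module via $(i,x+I)\mapsto[i,x]$, is isomorphic to the four-dimensional module $V$ with basis $X_1,X_2,X_3,X_4$ and action $(X_1,p_+)=X_2$, $(X_3,p_-)=X_4$, $(X_1,l)=\tfrac12X_1$, $(X_2,l)=-\tfrac12X_2$, $(X_3,l)=-\tfrac12X_3$, $(X_4,l)=\tfrac12X_4$ (all other products of basis elements of $V$ with $l,p_+,p_-$ being zero). Then there exists a basis $\{l,p_+,p_-,X_1,X_2,X_3,X_4\}$ of $L$ (with $X_1,\dots,X_4\in I$ and $l,p_+,p_-$ mapping to the corresponding basis elements of $\mathfrak{e}(2)$) in which the only nonzero products are $[l,p_+]=p_+$, $[p_+,l]=-p_+$, $[l,p_-]=-p_-$, $[p_-,l]=p_-$, $[X_1,p_+]=X_2$, $[X_3,p_-]=X_4$, $[X_1,l]=\tfrac12X_1$, $[X_2,l]=-\tfrac12X_2$, $[X_3,l]=-\tfrac12X_3$, $[X_4,l]=\tfrac12X_4$.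
   Context: A (right) Leibniz algebra is a vector space $L$ with a bilinear bracket satisfying $[[x,y],z]=[[x,z],y]+[x,[y,z]]$ for all $x,y,z\in L$. The ideal $I$ generated by the squares satisfies $[L,I]=0$, so $L/I$ is a Lie algebra and $I$ is a right $L/I$-module via $(i,x+I)\mapsto[i,x]$. Here $\mathfrak{e}(2)$ denotes the complex (complexified Euclidean) Lie algebra with basis $\{l,p_+,p_-\}$ and brackets $[l,p_+]=p_+$, $[l,p_-]=-p_-$, $[p_+,p_-]=0$. A right module $V$ over a Lie algebra $\mathfrak g$ satisfies $((v,x),y)-((v,y),x)=(v,[x,y])$. *)

theory Defs
  imports Complex_Main "HOL-Library.Product_Plus"
begin

text \<open>A complex vector space is modelled by a type 'a with an additive group
structure and a scalar multiplication sm :: complex => 'a => 'a satisfying the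
vector space axioms (locale vector_space).\<close>

definition is_bilinear :: "(complex \<Rightarrow> 'a::ab_group_add \<Rightarrow> 'a) \<Rightarrow> ('a \<Rightarrow> 'a \<Rightarrow> 'a) \<Rightarrow> bool" where
  "is_bilinear sm br \<longleftrightarrow> (\<forall>x. Vector_Spaces.linear sm sm (br x)) \<and> (\<forall>y. Vector_Spaces.linear sm sm (\<lambda>x. br x y))"

definition right_leibniz :: "('a::ab_group_add \<Rightarrow> 'a \<Rightarrow> 'a) \<Rightarrow> bool" where
  "right_leibniz br \<longleftrightarrow> (\<forall>x y z. br (br x y) z = br (br x z) y + br x (br y z))"

definition is_ideal :: "(complex \<Rightarrow> 'a::ab_group_add \<Rightarrow> 'a) \<Rightarrow> ('a \<Rightarrow> 'a \<Rightarrow> 'a) \<Rightarrow> 'a set \<Rightarrow> bool" where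
  "is_ideal sm br J \<longleftrightarrow> module.subspace sm J \<and> (\<forall>x\<in>J. \<forall>y. br x y \<in> J \<and> br y x \<in> J)"

definition square_ideal :: "(complex \<Rightarrow> 'a::ab_group_add \<Rightarrow> 'a) \<Rightarrow> ('a \<Rightarrow> 'a \<Rightarrow> 'a) \<Rightarrow> 'a set" where
  "square_ideal sm br = \<Inter>{J. is_ideal sm br J \<and> (\<forall>x. br x x \<in> J)}"

text \<open>The Lie algebra e(2): an element (a, b, c) stands for a l + b p_+ + c p_-.\<close>
type_synonym e2 = "complex \<times> complex \<times> complex"

definition e2_scale :: "complex \<Rightarrow> e2 \<Rightarrow> e2" where
  "e2_scale s v = (case v of (a, b, c) \<Rightarrow> (s * a, s * b, s * c))"

text \<open>[l,p+] = p+, [l,p-] = -p-, [p+,p-] = 0, extended bilinearly and antisymmetrically.\<close>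
definition e2_br :: "e2 \<Rightarrow> e2 \<Rightarrow> e2" where
  "e2_br v w = (case v of (a, b, c) \<Rightarrow> case w of (a', b', c') \<Rightarrow>
      (0, a * b' - b * a', c * a' - a * c'))"

text \<open>The four-dimensional right e(2)-module V: (x1,x2,x3,x4) stands for
  x1 X1 + x2 X2 + x3 X3 + x4 X4, with (X1,p+) = X2, (X3,p-) = X4,
  (X1,l) = X1/2, (X2,l) = -X2/2, (X3,l) = -X3/2, (X4,l) = X4/2, all else zero.\<close>
type_synonym modV = "complex \<times> complex \<times> complex \<times> complex"

definition V_act :: "modV \<Rightarrow> e2 \<Rightarrow> modV" where
  "V_act v x = (case v of (x1, x2, x3, x4) \<Rightarrow> case x of (a, b, c) \<Rightarrow>
     (a / 2 * x1, b * x1 - a / 2 * x2, - a / 2 * x3, c * x3 + a / 2 * x4))"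

text \<open>The target multiplication table, for the basis list
  B = [l, p+, p-, X1, X2, X3, X4] (indices 0..6): value of [B!i, B!j].\<close>
definition target_table :: "(complex \<Rightarrow> 'a::ab_group_add \<Rightarrow> 'a) \<Rightarrow> 'a list \<Rightarrow> nat \<Rightarrow> nat \<Rightarrow> 'a" where
  "target_table sm B i j =
    (if (i, j) = (0, 1) then B ! 1
     else if (i, j) = (1, 0) then - (B ! 1)
     else if (i, j) = (0, 2) then - (B ! 2)
     else if (i, j) = (2, 0) then B ! 2
     else if (i, j) = (3, 1) then B ! 4
     else if (i, j) = (5, 2) then B ! 6
     else if (i, j) = (3, 0) then sm (1/2) (B ! 3)
     else if (i, j) = (4, 0) then sm (-1/2) (B ! 4)
     else if (i, j) = (5, 0) then sm (-1/2) (B ! 5)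
     else if (i, j) = (6, 0) then sm (1/2) (B ! 6)
     else 0)"

end

theory Submission
  imports Defs
begin

text \<open>In a right Leibniz algebra the square ideal I is annihilated from the left,
  [L, I] = 0. Fix a lift x of l. Through \<phi>, right multiplication by x acts on I
  with eigenvalues 1/2 and -1/2 only, so for every other scalar c the map
  i \<mapsto> [i, x] - c i is bijective on I. Solving such equations with c = 0, -1, 1
  corrects arbitrary lifts of l, p+, p- by elements of I so that [l, l] = 0,
  [p+, l] = -p+ and [p-, l] = p-. The Leibniz identity then shows that every
  remaining defect, such as [l, p+] - p+ or [p+, p-], lies in I and is an eigenvector
  of right multiplication by l with eigenvalue in {0, 1, -1, 2, -2}, hence vanishes.
  Completing with the preimages under \<phi> of the standard basis of V gives the basis.\<close>

locale leibniz_algebra = vector_space sm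
  for sm :: "complex \<Rightarrow> 'a::ab_group_add \<Rightarrow> 'a" +
  fixes br :: "'a \<Rightarrow> 'a \<Rightarrow> 'a"
  assumes bilinear: "is_bilinear sm br"
    and leibniz: "right_leibniz br"
begin

lemma module_hom_br_right: "module_hom sm sm (br x)"
  using bilinear by (simp add: is_bilinear_def module_hom_iff_linear)

lemma module_hom_br_left: "module_hom sm sm (\<lambda>x. br x y)"
  using bilinear by (simp add: is_bilinear_def module_hom_iff_linear)

lemmas br_add_right = module_hom.add[OF module_hom_br_right]
  and br_scale_right = module_hom.scale[OF module_hom_br_right]
  and br_zero_right [simp] = module_hom.zero[OF module_hom_br_right]
  and br_minus_right = module_hom.neg[OF module_hom_br_right]
  and br_add_left = module_hom.add[OF module_hom_br_left]
  and br_zero_left [simp] = module_hom.zero[OF module_hom_br_left]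
  and br_minus_left = module_hom.neg[OF module_hom_br_left]
  and br_diff_left = module_hom.diff[OF module_hom_br_left]

lemma leibniz_identity: "br (br x y) z = br (br x z) y + br x (br y z)"
  using leibniz unfolding right_leibniz_def by blast

text \<open>The left annihilator of L is an ideal containing all squares.\<close>
lemma br_square_ideal_right:
  assumes "i \<in> square_ideal sm br"
  shows "br x i = 0"
proof -
  let ?A = "{i. \<forall>x. br x i = 0}"
  have "is_ideal sm br ?A"
    unfolding is_ideal_def subspace_def
  proof (intro conjI ballI allI)
    fix i y assume i: "i \<in> ?A"
    show "br i y \<in> ?A"
    proof (intro CollectI allI)
      fix x show "br x (br i y) = 0"
        using i leibniz_identity[of x i y] by simp
    qed
    show "br y i \<in> ?A"
      using i by simp
  qed (auto simp: br_add_right br_scale_right)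
  moreover have "br y y \<in> ?A" for y
    using leibniz_identity[of _ y y] by simp
  ultimately show ?thesis
    using assms unfolding square_ideal_def by blast
qed

end

locale e2_extension = leibniz_algebra sm br
  for sm :: "complex \<Rightarrow> 'a::ab_group_add \<Rightarrow> 'a" and br +
  fixes \<pi> :: "'a \<Rightarrow> e2"
    and \<phi> :: "'a \<Rightarrow> modV"
  assumes pi_linear: "Vector_Spaces.linear sm e2_scale \<pi>"
    and pi_surj: "surj \<pi>"
    and pi_kernel: "{x. \<pi> x = (0, 0, 0)} = square_ideal sm br"
    and pi_br: "\<forall>x y. \<pi> (br x y) = e2_br (\<pi> x) (\<pi> y)"
    and phi_add: "\<forall>u\<in>square_ideal sm br. \<forall>v\<in>square_ideal sm br. \<phi> (u + v) = \<phi> u + \<phi> v"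
    and phi_scale: "\<forall>c. \<forall>u\<in>square_ideal sm br. \<phi> (sm c u) = (case \<phi> u of (x1, x2, x3, x4) \<Rightarrow> (c * x1, c * x2, c * x3, c * x4))"
    and phi_bij: "bij_betw \<phi> (square_ideal sm br) UNIV"
    and phi_br: "\<forall>i\<in>square_ideal sm br. \<forall>x. \<phi> (br i x) = V_act (\<phi> i) (\<pi> x)"
begin

abbreviation I :: "'a set" where
  "I \<equiv> square_ideal sm br"

lemma module_hom_pi: "module_hom sm e2_scale \<pi>"
  using pi_linear by (simp add: module_hom_iff_linear)

lemmas pi_add = module_hom.add[OF module_hom_pi]
  and pi_scale = module_hom.scale[OF module_hom_pi]
  and pi_minus = module_hom.neg[OF module_hom_pi]
  and pi_diff = module_hom.diff[OF module_hom_pi]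

lemma mem_I_iff: "x \<in> I \<longleftrightarrow> \<pi> x = (0, 0, 0)"
  using pi_kernel by blast

lemma zero_mem_I: "0 \<in> I"
  using module_hom.zero[OF module_hom_pi] by (simp add: mem_I_iff zero_prod_def)

lemma add_mem_I: "x \<in> I \<Longrightarrow> y \<in> I \<Longrightarrow> x + y \<in> I"
  by (simp add: mem_I_iff pi_add)

lemma scale_mem_I: "x \<in> I \<Longrightarrow> sm c x \<in> I"
  by (simp add: mem_I_iff pi_scale e2_scale_def)

lemma minus_mem_I: "x \<in> I \<Longrightarrow> - x \<in> I"
  by (simp add: mem_I_iff pi_minus)

lemma br_mem_I: "x \<in> I \<Longrightarrow> br x y \<in> I"
  by (simp add: mem_I_iff pi_br e2_br_def)

lemma phi_eqD: "x \<in> I \<Longrightarrow> y \<in> I \<Longrightarrow> \<phi> x = \<phi> y \<Longrightarrow> x = y"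
  using phi_bij by (meson bij_betw_def inj_onD)

lemma phi_preimage: obtains x where "x \<in> I" "\<phi> x = t"
  using phi_bij unfolding bij_betw_def by (metis UNIV_I imageE)

lemma pi_preimage: obtains x where "\<pi> x = t"
  using pi_surj by (metis surjD)

lemma phi_zero: "\<phi> 0 = 0"
  using phi_add zero_mem_I by (metis add_0 add_cancel_right_right)

lemma phi_scale_eq: "i \<in> I \<Longrightarrow> \<phi> i = (a, b, e, f) \<Longrightarrow> \<phi> (sm c i) = (c * a, c * b, c * e, c * f)"
  using phi_scale by simp

lemma phi_br_l:
  "i \<in> I \<Longrightarrow> \<pi> x = (1, 0, 0) \<Longrightarrow> \<phi> i = (a, b, e, f) \<Longrightarrow> \<phi> (br i x) = (a / 2, - b / 2, - e / 2, f / 2)"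
  using phi_br by (simp add: V_act_def)

lemma br_I_eq_iff: "i \<in> I \<Longrightarrow> y \<in> I \<Longrightarrow> br i x = y \<longleftrightarrow> V_act (\<phi> i) (\<pi> x) = \<phi> y"
  using phi_br phi_eqD br_mem_I by metis

lemma l_eigenvector_eq_zero:
  assumes d: "d \<in> I" and x: "\<pi> x = (1, 0, 0)" and eigen: "br d x = sm c d"
    and "c \<noteq> 1 / 2" and "c \<noteq> - 1 / 2"
  shows "d = 0"
proof -
  obtain a b e f where d_coords: "\<phi> d = (a, b, e, f)"
    by (cases "\<phi> d") auto
  have "(a / 2, - b / 2, - e / 2, f / 2) = (c * a, c * b, c * e, c * f)"
    using phi_br_l[OF d x d_coords] phi_scale_eq[OF d d_coords, of c] eigen by simp
  then have "a * (1 / 2 - c) = 0" "b * (- 1 / 2 - c) = 0" "e * (- 1 / 2 - c) = 0" "f * (1 / 2 - c) = 0"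
    by (auto simp: algebra_simps)
  with assms(4,5) have "\<phi> d = \<phi> 0"
    by (simp add: d_coords phi_zero zero_prod_def)
  then show ?thesis
    using phi_eqD d zero_mem_I by blast
qed

lemma l_shifted_equation_solvable:
  assumes e: "e \<in> I" and x: "\<pi> x = (1, 0, 0)"
    and "c \<noteq> 1 / 2" and "c \<noteq> - 1 / 2"
  obtains v where "v \<in> I" "br v x = e + sm c v"
proof -
  obtain e1 e2 e3 e4 where e_coords: "\<phi> e = (e1, e2, e3, e4)"
    by (cases "\<phi> e") auto
  define t where "t = (e1 / (1 / 2 - c), e2 / (- 1 / 2 - c), e3 / (- 1 / 2 - c), e4 / (1 / 2 - c))"
  obtain v where v: "v \<in> I" "\<phi> v = t"
    by (rule phi_preimage)
  have "1 / 2 - c \<noteq> 0" "- 1 / 2 - c \<noteq> 0"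
    using assms(3,4) by auto
  then have "\<phi> (br v x) = \<phi> (e + sm c v)"
    using phi_br_l[OF v(1) x v(2)[unfolded t_def]] phi_scale_eq[OF v(1) v(2)[unfolded t_def], of c]
      phi_add e v(1) scale_mem_I[OF v(1)] e_coords
    by (simp add: field_simps)
  then have "br v x = e + sm c v"
    using phi_eqD br_mem_I[OF v(1)] add_mem_I[OF e scale_mem_I[OF v(1)]] by blast
  with v(1) show ?thesis
    by (rule that)
qed

lemma normalized_lifts_exist:
  obtains l p q where "\<pi> l = (1, 0, 0)" "\<pi> p = (0, 1, 0)" "\<pi> q = (0, 0, 1)"
    and "br l l = 0" "br p l = - p" "br q l = q"
proof -
  obtain l0 where l0: "\<pi> l0 = (1, 0, 0)"
    by (rule pi_preimage)
  have l0_defect: "br l0 l0 \<in> I"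
    by (simp add: mem_I_iff pi_br l0 e2_br_def)
  obtain u where u: "u \<in> I" "br u l0 = - br l0 l0 + sm 0 u"
    using l_shifted_equation_solvable[OF minus_mem_I[OF l0_defect] l0, where c = 0] by auto
  define l where "l = l0 + u"
  have l: "\<pi> l = (1, 0, 0)"
    using u(1) by (simp add: l_def pi_add l0 mem_I_iff)
  have ll: "br l l = 0"
    using u by (simp add: l_def br_add_left br_add_right br_square_ideal_right)
  obtain p0 where p0: "\<pi> p0 = (0, 1, 0)"
    by (rule pi_preimage)
  have p0_defect: "br p0 l + p0 \<in> I"
    by (simp add: mem_I_iff pi_br l p0 pi_add e2_br_def zero_prod_def)
  obtain v where v: "v \<in> I" "br v l = - (br p0 l + p0) + sm (- 1) v"
    using l_shifted_equation_solvable[OF minus_mem_I[OF p0_defect] l, where c = "- 1"] by auto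
  obtain q0 where q0: "\<pi> q0 = (0, 0, 1)"
    by (rule pi_preimage)
  have q0_defect: "br q0 l - q0 \<in> I"
    by (simp add: mem_I_iff pi_br l q0 pi_diff e2_br_def zero_prod_def)
  obtain w where w: "w \<in> I" "br w l = - (br q0 l - q0) + sm 1 w"
    using l_shifted_equation_solvable[OF minus_mem_I[OF q0_defect] l, where c = 1]
    by (auto simp: complex_eq_iff)
  show ?thesis
  proof
    show "\<pi> (p0 + v) = (0, 1, 0)" "\<pi> (q0 + w) = (0, 0, 1)"
      using v(1) w(1) by (simp_all add: pi_add p0 q0 mem_I_iff)
    show "br (p0 + v) l = - (p0 + v)" "br (q0 + w) l = q0 + w"
      using v(2) w(2) by (simp_all add: br_add_left)
  qed fact+
qed

lemma normalized_lifts_br: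
  assumes l: "\<pi> l = (1, 0, 0)" and p: "\<pi> p = (0, 1, 0)" and q: "\<pi> q = (0, 0, 1)"
    and ll: "br l l = 0" and pl: "br p l = - p" and ql: "br q l = q"
  shows "br l p = p" "br l q = - q" "br p p = 0" "br q q = 0" "br p q = 0" "br q p = 0"
proof -
  have zero_if_eigen: "d = 0" if "br d l = sm c d" "\<pi> d = (0, 0, 0)" "c \<in> {0, 1, - 1, 2, - 2}" for d c
    using l_eigenvector_eq_zero[of d l c] that l by (auto simp: mem_I_iff complex_eq_iff)
  have "br (br l p - p) l = sm (- 1) (br l p - p)"
    using leibniz_identity[of l p l] by (simp add: br_diff_left ll pl br_minus_right)
  then have "br l p - p = 0"
    by (rule zero_if_eigen) (simp_all add: pi_br l p pi_diff e2_br_def zero_prod_def)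
  then show "br l p = p" by simp
  have "br (br l q + q) l = sm 1 (br l q + q)"
    using leibniz_identity[of l q l] by (simp add: br_add_left ll ql)
  then have "br l q + q = 0"
    by (rule zero_if_eigen) (simp_all add: pi_br l q pi_add e2_br_def zero_prod_def)
  then show "br l q = - q"
    by (simp add: eq_neg_iff_add_eq_0)
  have "br (br p p) l = sm (- 2) (br p p)"
    using leibniz_identity[of p p l]
    by (simp add: pl br_minus_left br_minus_right scale_left_distrib[of "- 1" "- 1", simplified])
  then show "br p p = 0"
    by (rule zero_if_eigen) (simp_all add: pi_br p e2_br_def)
  have "br (br q q) l = sm 2 (br q q)"
    using leibniz_identity[of q q l] by (simp add: ql scale_left_distrib[of 1 1, simplified])
  then show "br q q = 0"
    by (rule zero_if_eigen) (simp_all add: pi_br q e2_br_def)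
  have "br (br p q) l = sm 0 (br p q)"
    using leibniz_identity[of p q l] by (simp add: pl ql br_minus_left)
  then show "br p q = 0"
    by (rule zero_if_eigen) (simp_all add: pi_br p q e2_br_def)
  have "br (br q p) l = sm 0 (br q p)"
    using leibniz_identity[of q p l] by (simp add: pl ql br_minus_right)
  then show "br q p = 0"
    by (rule zero_if_eigen) (simp_all add: pi_br p q e2_br_def)
qed

end

locale e2_normalized_frame = e2_extension sm br \<pi> \<phi>
  for sm :: "complex \<Rightarrow> 'a::ab_group_add \<Rightarrow> 'a" and br \<pi> \<phi> +
  fixes l p q X1 X2 X3 X4 :: 'a
  assumes pi_l: "\<pi> l = (1, 0, 0)" and pi_p: "\<pi> p = (0, 1, 0)" and pi_q: "\<pi> q = (0, 0, 1)"
    and br_l_l: "br l l = 0" and br_p_l: "br p l = - p" and br_q_l: "br q l = q"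
    and X_mem_I: "X1 \<in> I" "X2 \<in> I" "X3 \<in> I" "X4 \<in> I"
    and phi_X: "\<phi> X1 = (1, 0, 0, 0)" "\<phi> X2 = (0, 1, 0, 0)" "\<phi> X3 = (0, 0, 1, 0)" "\<phi> X4 = (0, 0, 0, 1)"
begin

abbreviation lift_comb :: "complex \<Rightarrow> complex \<Rightarrow> complex \<Rightarrow> 'a" where
  "lift_comb a b c \<equiv> sm a l + sm b p + sm c q"

abbreviation X_comb :: "complex \<Rightarrow> complex \<Rightarrow> complex \<Rightarrow> complex \<Rightarrow> 'a" where
  "X_comb d e f g \<equiv> sm d X1 + sm e X2 + sm f X3 + sm g X4"

lemma pi_lift_comb: "\<pi> (lift_comb a b c) = (a, b, c)"
  by (simp add: pi_add pi_scale e2_scale_def pi_l pi_p pi_q)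

lemma X_comb_mem_I: "X_comb d e f g \<in> I"
  by (simp add: X_mem_I add_mem_I scale_mem_I)

lemma phi_X_comb: "\<phi> (X_comb d e f g) = (d, e, f, g)"
  by (simp add: phi_X X_mem_I phi_add phi_scale_eq add_mem_I scale_mem_I)

lemma frame_combination_eq_zero:
  assumes "lift_comb a b c + X_comb d e f g = 0"
  shows "a = 0" "b = 0" "c = 0" "d = 0" "e = 0" "f = 0" "g = 0"
proof -
  have "\<pi> (X_comb d e f g) = (0, 0, 0)"
    using X_comb_mem_I mem_I_iff by blast
  then have "(a, b, c) = \<pi> (lift_comb a b c + X_comb d e f g)"
    by (simp only: pi_add[of "lift_comb a b c"] pi_lift_comb) simp
  also have "\<dots> = (0, 0, 0)"
    using assms zero_mem_I mem_I_iff by simp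
  finally show "a = 0" "b = 0" "c = 0"
    by simp_all
  then have "X_comb d e f g = 0"
    using assms by simp
  then show "d = 0" "e = 0" "f = 0" "g = 0"
    using phi_X_comb[of d e f g] by (simp_all add: phi_zero zero_prod_def)
qed

lemma frame_combination_exists:
  obtains a b c d e f g where "x = lift_comb a b c + X_comb d e f g"
proof -
  obtain a b c where abc: "\<pi> x = (a, b, c)"
    by (cases "\<pi> x") auto
  then have "x - lift_comb a b c \<in> I"
    by (simp add: mem_I_iff pi_diff pi_lift_comb zero_prod_def)
  moreover obtain d e f g where "\<phi> (x - lift_comb a b c) = (d, e, f, g)"
    by (cases "\<phi> (x - lift_comb a b c)") auto
  ultimately have "x - lift_comb a b c = X_comb d e f g"
    using phi_eqD X_comb_mem_I phi_X_comb by metis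
  then show ?thesis
    by (intro that[of a b c d e f g]) (simp add: algebra_simps)
qed

lemma frame_distinct: "distinct [l, p, q, X1, X2, X3, X4]"
  using pi_l pi_p pi_q X_mem_I phi_X by (auto simp: mem_I_iff)

lemma frame_independent: "\<not> dependent (set [l, p, q, X1, X2, X3, X4])"
proof
  assume "dependent (set [l, p, q, X1, X2, X3, X4])"
  then obtain u where nontrivial: "\<exists>v\<in>set [l, p, q, X1, X2, X3, X4]. u v \<noteq> 0"
    and "(\<Sum>v\<in>set [l, p, q, X1, X2, X3, X4]. sm (u v) v) = 0"
    by (auto simp: dependent_finite)
  then have "lift_comb (u l) (u p) (u q) + X_comb (u X1) (u X2) (u X3) (u X4) = 0"
    using frame_distinct by (simp add: add.assoc)
  with nontrivial show False
    using frame_combination_eq_zero by auto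
qed

lemma frame_spanning: "span (set [l, p, q, X1, X2, X3, X4]) = UNIV"
proof (intro set_eqI iffI UNIV_I)
  fix x
  let ?S = "set [l, p, q, X1, X2, X3, X4]"
  obtain a b c d e f g where x: "x = lift_comb a b c + X_comb d e f g"
    by (rule frame_combination_exists)
  show "x \<in> span ?S"
    unfolding x by (intro span_add span_scale span_base) simp_all
qed

lemma X_br_lifts:
  "br X1 l = sm (1 / 2) X1" "br X2 l = sm (- 1 / 2) X2" "br X3 l = sm (- 1 / 2) X3" "br X4 l = sm (1 / 2) X4"
  "br X1 p = X2" "br X2 p = 0" "br X3 p = 0" "br X4 p = 0"
  "br X1 q = 0" "br X2 q = 0" "br X3 q = X4" "br X4 q = 0"
  by (simp_all add: br_I_eq_iff X_mem_I scale_mem_I zero_mem_I phi_X phi_scale_eq phi_zero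
      pi_l pi_p pi_q V_act_def zero_prod_def del: scale_minus_left)

lemma frame_table:
  defines "B \<equiv> [l, p, q, X1, X2, X3, X4]"
  shows "\<forall>i<7. \<forall>j<7. br (B ! i) (B ! j) = target_table sm B i j"
proof (intro allI impI)
  fix i j :: nat
  assume "i < 7" "j < 7"
  then have "i = 0 \<or> i = 1 \<or> i = 2 \<or> i = 3 \<or> i = 4 \<or> i = 5 \<or> i = 6"
    and "j = 0 \<or> j = 1 \<or> j = 2 \<or> j = 3 \<or> j = 4 \<or> j = 5 \<or> j = 6"
    by linarith+
  then show "br (B ! i) (B ! j) = target_table sm B i j"
    unfolding B_def
    by (elim disjE) (simp_all add: target_table_def X_br_lifts br_square_ideal_right X_mem_I
        br_l_l br_p_l br_q_l normalized_lifts_br[OF pi_l pi_p pi_q br_l_l br_p_l br_q_l])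
qed

end

theorem mainTheorem1:
  fixes sm :: "complex \<Rightarrow> 'a::ab_group_add \<Rightarrow> 'a"
    and br :: "'a \<Rightarrow> 'a \<Rightarrow> 'a"
    and \<pi> :: "'a \<Rightarrow> e2"
    and \<phi> :: "'a \<Rightarrow> modV"
  assumes vs: "vector_space sm"
    and bil: "is_bilinear sm br"
    and leib: "right_leibniz br"
    \<comment> \<open>L / I is isomorphic to e(2): a surjective linear Lie homomorphism with kernel I\<close>
    and pi_lin: "Vector_Spaces.linear sm e2_scale \<pi>"
    and pi_surj: "surj \<pi>"
    and pi_ker: "{x. \<pi> x = (0, 0, 0)} = square_ideal sm br"
    and pi_hom: "\<forall>x y. \<pi> (br x y) = e2_br (\<pi> x) (\<pi> y)"
    \<comment> \<open>I is isomorphic to V as right e(2)-module, action (i, x + I) |-> [i, x]\<close>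
    and phi_add: "\<forall>u\<in>square_ideal sm br. \<forall>v\<in>square_ideal sm br. \<phi> (u + v) = \<phi> u + \<phi> v"
    and phi_scale: "\<forall>c. \<forall>u\<in>square_ideal sm br. \<phi> (sm c u) = (case \<phi> u of (x1, x2, x3, x4) \<Rightarrow> (c * x1, c * x2, c * x3, c * x4))"
    and phi_bij: "bij_betw \<phi> (square_ideal sm br) UNIV"
    and phi_equiv: "\<forall>i\<in>square_ideal sm br. \<forall>x. \<phi> (br i x) = V_act (\<phi> i) (\<pi> x)"
  shows "\<exists>l pp pm X1 X2 X3 X4.
           (let B = [l, pp, pm, X1, X2, X3, X4] in
              distinct B \<and> \<not> module.dependent sm (set B) \<and> module.span sm (set B) = UNIV
            \<and> {X1, X2, X3, X4} \<subseteq> square_ideal sm br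
            \<and> \<pi> l = (1, 0, 0) \<and> \<pi> pp = (0, 1, 0) \<and> \<pi> pm = (0, 0, 1)
            \<and> (\<forall>i<7. \<forall>j<7. br (B ! i) (B ! j) = target_table sm B i j))"
proof -
  interpret e2_extension sm br \<pi> \<phi>
    by (intro e2_extension.intro leibniz_algebra.intro leibniz_algebra_axioms.intro
        e2_extension_axioms.intro assms)
  obtain l pp pm where lifts: "\<pi> l = (1, 0, 0)" "\<pi> pp = (0, 1, 0)" "\<pi> pm = (0, 0, 1)"
    and normalized: "br l l = 0" "br pp l = - pp" "br pm l = pm"
    by (rule normalized_lifts_exist)
  obtain X1 X2 X3 X4 where X: "{X1, X2, X3, X4} \<subseteq> square_ideal sm br"
    and phi_X: "\<phi> X1 = (1, 0, 0, 0)" "\<phi> X2 = (0, 1, 0, 0)" "\<phi> X3 = (0, 0, 1, 0)" "\<phi> X4 = (0, 0, 0, 1)"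
    by (metis phi_preimage insert_subset empty_subsetI)
  interpret e2_normalized_frame sm br \<pi> \<phi> l pp pm X1 X2 X3 X4
    using lifts normalized X phi_X by unfold_locales auto
  show ?thesis
    unfolding Let_def
    using frame_distinct frame_independent frame_spanning frame_table X lifts by blast
qed

end
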